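(* With the setup below, the sequence $x_1,\ldots,x_p,y_1,\ldots,y_q$ is a regular sequence on the $R$-module $\widetilde{F}\cong R/\big(J+(\widetilde{\vec{x}}\widetilde{\vec{y}})+J'\big)$.
   Context: Let $k$ be a field, $\vec{x}=x_1,\ldots,x_n$, $\vec{y}=y_1,\ldots,y_{n'}$, $R=k[[\vec{x},\vec{y}]]$, $0\le p\le n$, $0\le q\le n'$. Let $J$ be an ideal generated by power series in $x_{p+1},\ldots,x_n$ only with $J\subseteq(x_{p+1},\ldots,x_n)^2$, and $J'$ an ideal generated by power series in $y_{q+1},\ldots,y_{n'}$ only with $J'\subseteq(y_{q+1},\ldots,y_{n'})^2$ (viewed in $R$). Let $\widetilde{\vec{x}}=x_{p+1},\ldots,x_n$, $\widetilde{\vec{y}}=y_{q+1},\ldots,y_{n'}$, $W=R/(\widetilde{\vec{x}},\widetilde{\vec{y}})$, and $\widetilde{F}=\frac{R}{J+(\widetilde{\vec{y}})}\times_W\frac{R}{(\widetilde{\vec{x}})+J'}$, the fiber product over the natural surjections onto $W$; $(\widetilde{\vec{x}}\widetilde{\vec{y}})$ is the ideal generated by all $x_iy_j$ with $p<i\le n$, $q<j\le n'$. *)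

theory Defs
  imports "HOL-Algebra.Algebra"
begin

text \<open>A monomial is an exponent vector nat => nat; a power series in the
variables z_0..z_{N-1} is a coefficient function on monomials that vanishes
on monomials involving a variable z_i with i >= N.\<close>

type_synonym mono = "nat \<Rightarrow> nat"

definition mono_in :: "nat set \<Rightarrow> mono \<Rightarrow> bool" where
  "mono_in V m \<longleftrightarrow> (\<forall>i. i \<notin> V \<longrightarrow> m i = 0)"

definition ps_ring :: "nat \<Rightarrow> ((mono \<Rightarrow> 'a::field)) ring" where
  "ps_ring N = \<lparr> carrier = {f. \<forall>m. f m \<noteq> 0 \<longrightarrow> mono_in {..<N} m},
      monoid.mult = (\<lambda>f g m. if mono_in {..<N} m
                       then (\<Sum>a\<in>{a. \<forall>i. a i \<le> m i}. f a * g (\<lambda>i. m i - a i))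
                       else 0),
      monoid.one = (\<lambda>m. if (\<forall>i. m i = 0) then 1 else 0),
      ring.zero = (\<lambda>m. 0),
      ring.add = (\<lambda>f g m. f m + g m) \<rparr>"

definition ps_var :: "nat \<Rightarrow> (mono \<Rightarrow> 'a::field)" where
  "ps_var i = (\<lambda>m. if m = (\<lambda>j. if j = i then 1 else 0) then 1 else 0)"


definition submod_gen :: "('r, 'm) module \<Rightarrow> 'r list \<Rightarrow> 'm set" where
  "submod_gen M zs = {finsum M (\<lambda>j. zs ! j \<odot>\<^bsub>M\<^esub> v j) {..<length zs} | v.
                        v \<in> {..<length zs} \<rightarrow> carrier M}"

definition regular_sequence :: "('r, 'x) ring_scheme \<Rightarrow> ('r, 'm) module \<Rightarrow> 'r list \<Rightarrow> bool" where
  "regular_sequence R M zs \<longleftrightarrow>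
     set zs \<subseteq> carrier R \<and>
     (\<forall>i < length zs. \<forall>v \<in> carrier M.
        zs ! i \<odot>\<^bsub>M\<^esub> v \<in> submod_gen M (take i zs) \<longrightarrow> v \<in> submod_gen M (take i zs)) \<and>
     submod_gen M zs \<noteq> carrier M"

definition fiber_product_module ::
  "('a, 'x) ring_scheme \<Rightarrow> 'a set \<Rightarrow> 'a set \<Rightarrow> 'a set \<Rightarrow> ('a, 'a set \<times> 'a set) module" where
  "fiber_product_module R I1 I2 I0 = \<lparr>
     carrier = {(A, B). \<exists>a\<in>carrier R. \<exists>b\<in>carrier R.
                  A = I1 +>\<^bsub>R\<^esub> a \<and> B = I2 +>\<^bsub>R\<^esub> b \<and> a \<ominus>\<^bsub>R\<^esub> b \<in> I0},
     monoid.mult = (\<lambda>_ _. undefined),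
     monoid.one = undefined,
     ring.zero = (I1, I2),
     ring.add = (\<lambda>(A, B) (C, D). (A \<oplus>\<^bsub>R Quot I1\<^esub> C, B \<oplus>\<^bsub>R Quot I2\<^esub> D)),
     module.smult = (\<lambda>r (A, B). ((I1 +>\<^bsub>R\<^esub> r) \<otimes>\<^bsub>R Quot I1\<^esub> A, (I2 +>\<^bsub>R\<^esub> r) \<otimes>\<^bsub>R Quot I2\<^esub> B)) \<rparr>"

end

theory Submission
  imports Defs
begin

text \<open>Write \<open>\<partial>\<^sub>t f\<close> for the quotient by \<open>z\<^sub>t\<close> of the terms of \<open>f\<close> involving \<open>z\<^sub>t\<close>, so that
  \<open>f = f(z\<^sub>t := 0) + z\<^sub>t \<partial>\<^sub>t f\<close> and \<open>\<partial>\<^sub>t (r k) = \<partial>\<^sub>t r \<cdot> k + r(z\<^sub>t := 0) \<cdot> \<partial>\<^sub>t k\<close>.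
  An ideal generated by series not involving \<open>z\<^sub>t\<close> is therefore stable under \<open>\<partial>\<^sub>t\<close>; this
  applies to \<open>I\<^sub>1 = J + (y\<^sup>~)\<close> and \<open>I\<^sub>2 = (x\<^sup>~) + J'\<close> for each \<open>z\<^sub>t\<close> among \<open>x\<^sub>1, \<dots>, x\<^sub>p,
  y\<^sub>1, \<dots>, y\<^sub>q\<close>, hence to \<open>I\<^sub>1 \<inter> I\<^sub>2\<close>. Applying \<open>\<partial>\<^sub>t\<close> to a congruence
  \<open>z\<^sub>t x \<equiv> \<Sum> z\<^sub>s r\<^sub>s\<close> modulo \<open>I\<^sub>1 \<inter> I\<^sub>2\<close>, where \<open>z\<^sub>s\<close> ranges over the earlier variables,
  gives \<open>x \<equiv> \<Sum> z\<^sub>s \<partial>\<^sub>t r\<^sub>s\<close>: each variable is a nonzerodivisor on \<open>R/(I\<^sub>1 \<inter> I\<^sub>2)\<close>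
  modulo the earlier ones. Because \<open>(x\<^sup>~, y\<^sup>~) \<subseteq> I\<^sub>1 + I\<^sub>2\<close>, this quotient is all of the
  fiber product; and it stays nonzero modulo the variables since \<open>I\<^sub>1\<close> lies in the maximal
  ideal.\<close>

section \<open>The power series ring\<close>

lemma ps_ring_simps:
  "carrier (ps_ring N) = {f. \<forall>m. f m \<noteq> 0 \<longrightarrow> mono_in {..<N} m}"
  "f \<otimes>\<^bsub>ps_ring N\<^esub> g = (\<lambda>m. if mono_in {..<N} m
                       then (\<Sum>a\<in>{a. \<forall>i. a i \<le> m i}. f a * g (\<lambda>i. m i - a i)) else 0)"
  "\<one>\<^bsub>ps_ring N\<^esub> = (\<lambda>m. if (\<forall>i. m i = 0) then 1 else 0)"
  "\<zero>\<^bsub>ps_ring N\<^esub> = (\<lambda>m. 0)"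
  "f \<oplus>\<^bsub>ps_ring N\<^esub> g = (\<lambda>m. f m + g m)"
  by (simp_all add: ps_ring_def)

lemma ps_add_apply: "(f \<oplus>\<^bsub>ps_ring N\<^esub> g) m = f m + g m"
  by (simp add: ps_ring_simps)

lemma ps_carrier_vanish: "f \<in> carrier (ps_ring N) \<Longrightarrow> \<not> mono_in {..<N} m \<Longrightarrow> f m = 0"
  by (auto simp: ps_ring_simps)

abbreviation mono_below :: "mono \<Rightarrow> mono set" where
  "mono_below m \<equiv> {a. \<forall>i. a i \<le> m i}"

lemma finite_mono_below:
  assumes "mono_in {..<N} m"
  shows "finite (mono_below m)"
proof (rule inj_on_finite[where f="\<lambda>a. restrict a {..<N}" and B="PiE {..<N} (\<lambda>i. {..m i})"])
  show "inj_on (\<lambda>a. restrict a {..<N}) (mono_below m)"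
  proof (rule inj_onI)
    fix a b assume a: "a \<in> mono_below m" and b: "b \<in> mono_below m"
      and e: "restrict a {..<N} = restrict b {..<N}"
    show "a = b"
    proof
      fix i show "a i = b i"
      proof (cases "i < N")
        case True then show ?thesis using fun_cong[OF e, of i] by simp
      next
        case False then have "m i = 0" using assms by (auto simp: mono_in_def)
        then show ?thesis using a b by (metis le_zero_eq mem_Collect_eq)
      qed
    qed
  qed
  show "(\<lambda>a. restrict a {..<N}) ` mono_below m \<subseteq> PiE {..<N} (\<lambda>i. {..m i})"
    by (auto simp: PiE_def extensional_def)
  show "finite (PiE {..<N} (\<lambda>i. {..m i}))" by (rule finite_PiE) auto
qed

lemma mono_in_below: "mono_in V m \<Longrightarrow> a \<in> mono_below m \<Longrightarrow> mono_in V a"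
  unfolding mono_in_def by (metis le_zero_eq mem_Collect_eq)

lemma ps_mult_comm:
  fixes f g :: "mono \<Rightarrow> 'a::field"
  shows "f \<otimes>\<^bsub>ps_ring N\<^esub> g = g \<otimes>\<^bsub>ps_ring N\<^esub> f"
proof
  fix m
  have "(\<Sum>a\<in>mono_below m. f a * g (\<lambda>i. m i - a i)) = (\<Sum>b\<in>mono_below m. g b * f (\<lambda>i. m i - b i))"
    by (rule sum.reindex_bij_witness[where i="\<lambda>b i. m i - b i" and j="\<lambda>b i. m i - b i"])
       (auto simp: mult.commute)
  then show "(f \<otimes>\<^bsub>ps_ring N\<^esub> g) m = (g \<otimes>\<^bsub>ps_ring N\<^esub> f) m"
    by (simp add: ps_ring_simps)
qed

lemma ps_mult_assoc:
  fixes f g h :: "mono \<Rightarrow> 'a::field"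
  shows "(f \<otimes>\<^bsub>ps_ring N\<^esub> g) \<otimes>\<^bsub>ps_ring N\<^esub> h = f \<otimes>\<^bsub>ps_ring N\<^esub> (g \<otimes>\<^bsub>ps_ring N\<^esub> h)"
proof
  fix m
  show "((f \<otimes>\<^bsub>ps_ring N\<^esub> g) \<otimes>\<^bsub>ps_ring N\<^esub> h) m = (f \<otimes>\<^bsub>ps_ring N\<^esub> (g \<otimes>\<^bsub>ps_ring N\<^esub> h)) m"
  proof (cases "mono_in {..<N} m")
    case True
    have fin: "finite (mono_below m)" by (rule finite_mono_below[OF True])
    have "((f \<otimes>\<^bsub>ps_ring N\<^esub> g) \<otimes>\<^bsub>ps_ring N\<^esub> h) m
        = (\<Sum>a\<in>mono_below m. (\<Sum>b\<in>mono_below a. f b * g (\<lambda>i. a i - b i)) * h (\<lambda>i. m i - a i))"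
      using True by (auto simp: ps_ring_simps intro!: sum.cong dest: mono_in_below)
    also have "\<dots> = (\<Sum>a\<in>mono_below m. \<Sum>b\<in>{b\<in>mono_below m. \<forall>i. b i \<le> a i}.
                        f b * g (\<lambda>i. a i - b i) * h (\<lambda>i. m i - a i))"
    proof (rule sum.cong[OF refl])
      fix a assume "a \<in> mono_below m"
      then have "mono_below a = {b\<in>mono_below m. \<forall>i. b i \<le> a i}" using order_trans by fastforce
      then show "(\<Sum>b\<in>mono_below a. f b * g (\<lambda>i. a i - b i)) * h (\<lambda>i. m i - a i)
          = (\<Sum>b\<in>{b\<in>mono_below m. \<forall>i. b i \<le> a i}. f b * g (\<lambda>i. a i - b i) * h (\<lambda>i. m i - a i))"
        by (simp add: sum_distrib_right)
    qed
    also have "\<dots> = (\<Sum>b\<in>mono_below m. \<Sum>a\<in>{a\<in>mono_below m. \<forall>i. b i \<le> a i}.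
                        f b * g (\<lambda>i. a i - b i) * h (\<lambda>i. m i - a i))"
      by (rule sum.swap_restrict[OF fin fin])
    also have "\<dots> = (\<Sum>b\<in>mono_below m. \<Sum>c\<in>mono_below (\<lambda>i. m i - b i).
                        f b * (g c * h (\<lambda>i. (m i - b i) - c i)))"
    proof (rule sum.cong[OF refl])
      fix b assume b: "b \<in> mono_below m"
      show "(\<Sum>a\<in>{a\<in>mono_below m. \<forall>i. b i \<le> a i}. f b * g (\<lambda>i. a i - b i) * h (\<lambda>i. m i - a i))
          = (\<Sum>c\<in>mono_below (\<lambda>i. m i - b i). f b * (g c * h (\<lambda>i. (m i - b i) - c i)))"
        by (rule sum.reindex_bij_witness[where i="\<lambda>c i. b i + c i" and j="\<lambda>a i. a i - b i"])
           (use b in \<open>auto simp: fun_eq_iff le_diff_conv2 add.commute diff_diff_left\<close>)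
    qed
    also have "\<dots> = (f \<otimes>\<^bsub>ps_ring N\<^esub> (g \<otimes>\<^bsub>ps_ring N\<^esub> h)) m"
    proof -
      have "\<And>b. mono_in {..<N} (\<lambda>i. m i - b i)" using True by (simp add: mono_in_below)
      then show ?thesis using True by (simp add: ps_ring_simps sum_distrib_left)
    qed
    finally show ?thesis .
  qed (simp add: ps_ring_simps)
qed

lemma ps_one_mult:
  fixes x :: "mono \<Rightarrow> 'a::field"
  assumes "x \<in> carrier (ps_ring N)"
  shows "\<one>\<^bsub>ps_ring N\<^esub> \<otimes>\<^bsub>ps_ring N\<^esub> x = x"
proof
  fix m
  show "(\<one>\<^bsub>ps_ring N\<^esub> \<otimes>\<^bsub>ps_ring N\<^esub> x) m = x m"
  proof (cases "mono_in {..<N} m")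
    case True
    have "(\<Sum>a\<in>mono_below m. (if \<forall>i. a i = 0 then 1 else 0) * x (\<lambda>i. m i - a i))
        = (\<Sum>a\<in>mono_below m. if a = (\<lambda>i. 0) then x m else 0)"
      by (rule sum.cong) (auto simp: fun_eq_iff)
    also have "\<dots> = x m" using finite_mono_below[OF True] by (simp add: sum.delta')
    finally show ?thesis using True by (simp add: ps_ring_simps)
  next
    case False then show ?thesis using assms by (auto simp: ps_ring_simps)
  qed
qed

lemma cring_ps_ring: "cring (ps_ring N :: (mono \<Rightarrow> 'a::field) ring)"
proof (rule cringI)
  show "abelian_group (ps_ring N :: (mono \<Rightarrow> 'a::field) ring)"
  proof (rule abelian_groupI)
    fix x :: "mono \<Rightarrow> 'a" assume x: "x \<in> carrier (ps_ring N)"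
    show "\<exists>y\<in>carrier (ps_ring N). y \<oplus>\<^bsub>ps_ring N\<^esub> x = \<zero>\<^bsub>ps_ring N\<^esub>"
      by (rule bexI[of _ "\<lambda>m. - x m"]) (use x in \<open>auto simp: ps_ring_simps\<close>)
  qed (auto simp: ps_ring_simps add.assoc add.commute, metis add.right_neutral)
  show "comm_monoid (ps_ring N :: (mono \<Rightarrow> 'a::field) ring)"
  proof (rule comm_monoidI)
    fix x y :: "mono \<Rightarrow> 'a"
    show "x \<otimes>\<^bsub>ps_ring N\<^esub> y \<in> carrier (ps_ring N)" by (auto simp: ps_ring_simps)
    show "x \<otimes>\<^bsub>ps_ring N\<^esub> y = y \<otimes>\<^bsub>ps_ring N\<^esub> x" by (rule ps_mult_comm)
  next
    show "\<one>\<^bsub>ps_ring N\<^esub> \<in> carrier (ps_ring N :: (mono \<Rightarrow> 'a::field) ring)"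
      by (auto simp: ps_ring_simps mono_in_def)
  qed (auto simp: ps_mult_assoc ps_one_mult)
  fix x y z :: "mono \<Rightarrow> 'a"
  show "(x \<oplus>\<^bsub>ps_ring N\<^esub> y) \<otimes>\<^bsub>ps_ring N\<^esub> z = x \<otimes>\<^bsub>ps_ring N\<^esub> z \<oplus>\<^bsub>ps_ring N\<^esub> y \<otimes>\<^bsub>ps_ring N\<^esub> z"
    by (auto simp: ps_ring_simps fun_eq_iff distrib_right sum.distrib)
qed

lemma ps_minus:
  fixes x :: "mono \<Rightarrow> 'a::field"
  assumes "x \<in> carrier (ps_ring N)"
  shows "\<ominus>\<^bsub>ps_ring N\<^esub> x = (\<lambda>m. - x m)"
proof -
  interpret cring "ps_ring N :: (mono \<Rightarrow> 'a) ring" by (rule cring_ps_ring)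
  show ?thesis by (rule minus_equality) (use assms in \<open>auto simp: ps_ring_simps\<close>)
qed

lemma ps_var_carrier: "t < N \<Longrightarrow> (ps_var t :: mono \<Rightarrow> 'a::field) \<in> carrier (ps_ring N)"
  by (auto simp: ps_ring_simps ps_var_def mono_in_def)

lemma ps_var_mult:
  fixes w :: "mono \<Rightarrow> 'a::field"
  shows "(ps_var t \<otimes>\<^bsub>ps_ring N\<^esub> w) m
       = (if mono_in {..<N} m \<and> m t \<noteq> 0 then w (m(t := m t - 1)) else 0)"
proof (cases "mono_in {..<N} m")
  case True
  let ?e = "(\<lambda>j. if j = t then 1 else 0) :: mono"
  have e: "(\<lambda>i. m i - ?e i) = m(t := m t - 1)" by (auto simp: fun_eq_iff)
  have "(\<Sum>a\<in>mono_below m. ps_var t a * w (\<lambda>i. m i - a i))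
      = (\<Sum>a\<in>mono_below m. if a = ?e then w (m(t := m t - 1)) else 0)"
    by (rule sum.cong[OF refl]) (auto simp: ps_var_def e)
  also have "\<dots> = (if m t \<noteq> 0 then w (m(t := m t - 1)) else 0)"
    using finite_mono_below[OF True] by (simp add: sum.delta')
  finally show ?thesis using True by (simp add: ps_ring_simps)
qed (simp add: ps_ring_simps)

section \<open>Division by a variable\<close>

definition ps_free_of :: "nat \<Rightarrow> (mono \<Rightarrow> 'a::zero) \<Rightarrow> bool" where
  "ps_free_of t f \<longleftrightarrow> (\<forall>m. f m \<noteq> 0 \<longrightarrow> m t = 0)"

definition ps_at_zero :: "nat \<Rightarrow> (mono \<Rightarrow> 'a::zero) \<Rightarrow> mono \<Rightarrow> 'a" where
  "ps_at_zero t f = (\<lambda>m. if m t = 0 then f m else 0)"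

text \<open>In the notation above, \<open>ps_at_zero t f\<close> is \<open>f(z\<^sub>t := 0)\<close> and \<open>ps_div_var t\<close> is \<open>\<partial>\<^sub>t\<close>.\<close>

definition ps_div_var :: "nat \<Rightarrow> (mono \<Rightarrow> 'a) \<Rightarrow> mono \<Rightarrow> 'a" where
  "ps_div_var t f = (\<lambda>m. f (m(t := Suc (m t))))"

lemma mono_in_upd: "t < N \<Longrightarrow> mono_in {..<N} (m(t := k)) = mono_in {..<N} m"
  by (auto simp: mono_in_def)

lemma ps_at_zero_carrier: "f \<in> carrier (ps_ring N) \<Longrightarrow> ps_at_zero t f \<in> carrier (ps_ring N)"
  by (auto simp: ps_ring_simps ps_at_zero_def)

lemma ps_div_var_carrier:
  "t < N \<Longrightarrow> f \<in> carrier (ps_ring N) \<Longrightarrow> ps_div_var t f \<in> carrier (ps_ring N)"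
  by (auto simp: ps_ring_simps ps_div_var_def mono_in_upd)

lemma ps_free_of_var: "s \<noteq> t \<Longrightarrow> ps_free_of t (ps_var s)"
  by (auto simp: ps_free_of_def ps_var_def)

lemma ps_free_of_mono_in:
  "(\<forall>m. f m \<noteq> 0 \<longrightarrow> mono_in V m) \<Longrightarrow> t \<notin> V \<Longrightarrow> ps_free_of t f"
  by (auto simp: ps_free_of_def mono_in_def)

lemma ps_at_zero_free_of: "ps_free_of t f \<Longrightarrow> ps_at_zero t f = f"
  by (auto simp: ps_free_of_def ps_at_zero_def fun_eq_iff)

lemma ps_div_var_free_of: "ps_free_of t f \<Longrightarrow> ps_div_var t f = \<zero>\<^bsub>ps_ring N\<^esub>"
  by (auto simp: ps_free_of_def ps_ring_simps ps_div_var_def fun_eq_iff)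

lemma ps_div_var_at_zero: "ps_div_var t (ps_at_zero t f) = \<zero>\<^bsub>ps_ring N\<^esub>"
  by (auto simp: ps_ring_simps ps_div_var_def ps_at_zero_def fun_eq_iff)

lemma ps_div_var_add: "ps_div_var t (f \<oplus>\<^bsub>ps_ring N\<^esub> g) = ps_div_var t f \<oplus>\<^bsub>ps_ring N\<^esub> ps_div_var t g"
  by (simp add: ps_ring_simps ps_div_var_def)

lemma ps_div_var_zero: "ps_div_var t \<zero>\<^bsub>ps_ring N\<^esub> = \<zero>\<^bsub>ps_ring N\<^esub>"
  by (simp add: ps_ring_simps ps_div_var_def)

lemma ps_div_var_minus:
  "t < N \<Longrightarrow> f \<in> carrier (ps_ring N) \<Longrightarrow>
   ps_div_var t (\<ominus>\<^bsub>ps_ring N\<^esub> f) = \<ominus>\<^bsub>ps_ring N\<^esub> ps_div_var t f"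
  using ps_minus[OF ps_div_var_carrier, of t N f] ps_minus[of f N] by (simp add: ps_div_var_def)

lemma ps_div_var_var_mult:
  fixes w :: "mono \<Rightarrow> 'a::field"
  assumes "t < N" "w \<in> carrier (ps_ring N)"
  shows "ps_div_var t (ps_var t \<otimes>\<^bsub>ps_ring N\<^esub> w) = w"
  using assms by (auto simp: ps_div_var_def ps_var_mult mono_in_upd fun_eq_iff ps_carrier_vanish)

lemma ps_at_zero_mult:
  fixes f g :: "mono \<Rightarrow> 'a::field"
  shows "ps_at_zero t (f \<otimes>\<^bsub>ps_ring N\<^esub> g) = ps_at_zero t f \<otimes>\<^bsub>ps_ring N\<^esub> ps_at_zero t g"
proof
  fix m
  show "ps_at_zero t (f \<otimes>\<^bsub>ps_ring N\<^esub> g) m = (ps_at_zero t f \<otimes>\<^bsub>ps_ring N\<^esub> ps_at_zero t g) m"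
  proof (cases "m t = 0")
    case True
    have "(\<Sum>a\<in>mono_below m. f a * g (\<lambda>i. m i - a i))
        = (\<Sum>a\<in>mono_below m. ps_at_zero t f a * ps_at_zero t g (\<lambda>i. m i - a i))"
    proof (rule sum.cong[OF refl])
      fix a assume "a \<in> mono_below m"
      then have "a t = 0" using True by (metis le_zero_eq mem_Collect_eq)
      then show "f a * g (\<lambda>i. m i - a i) = ps_at_zero t f a * ps_at_zero t g (\<lambda>i. m i - a i)"
        using True by (simp add: ps_at_zero_def)
    qed
    then show ?thesis using True by (simp add: ps_ring_simps ps_at_zero_def)
  next
    case False
    have "ps_at_zero t f a * ps_at_zero t g (\<lambda>i. m i - a i) = 0" for a
      using False by (cases "a t = 0") (simp_all add: ps_at_zero_def)
    then have "(\<Sum>a\<in>mono_below m. ps_at_zero t f a * ps_at_zero t g (\<lambda>i. m i - a i)) = 0"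
      by (intro sum.neutral) simp
    then show ?thesis using False by (simp add: ps_ring_simps ps_at_zero_def)
  qed
qed

lemma ps_var_decomp:
  fixes f :: "mono \<Rightarrow> 'a::field"
  assumes "t < N" "f \<in> carrier (ps_ring N)"
  shows "f = ps_at_zero t f \<oplus>\<^bsub>ps_ring N\<^esub> ps_var t \<otimes>\<^bsub>ps_ring N\<^esub> ps_div_var t f"
proof
  fix m
  have "m(t := Suc (m t - 1)) = m" if "m t \<noteq> 0" using that by auto
  then show "f m = (ps_at_zero t f \<oplus>\<^bsub>ps_ring N\<^esub> ps_var t \<otimes>\<^bsub>ps_ring N\<^esub> ps_div_var t f) m"
    using assms
    by (auto simp: ps_add_apply ps_var_mult ps_at_zero_def ps_div_var_def ps_carrier_vanish)
qed

lemma ps_div_var_mult: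
  fixes r k :: "mono \<Rightarrow> 'a::field"
  assumes t: "t < N" and r: "r \<in> carrier (ps_ring N)" and k: "k \<in> carrier (ps_ring N)"
  shows "ps_div_var t (r \<otimes>\<^bsub>ps_ring N\<^esub> k)
       = ps_div_var t r \<otimes>\<^bsub>ps_ring N\<^esub> k \<oplus>\<^bsub>ps_ring N\<^esub> ps_at_zero t r \<otimes>\<^bsub>ps_ring N\<^esub> ps_div_var t k"
proof -
  interpret R: cring "ps_ring N :: (mono \<Rightarrow> 'a) ring" by (rule cring_ps_ring)
  define v where "v = (ps_var t :: mono \<Rightarrow> 'a)"
  define D where "D = ps_div_var t r \<otimes>\<^bsub>ps_ring N\<^esub> k \<oplus>\<^bsub>ps_ring N\<^esub> ps_at_zero t r \<otimes>\<^bsub>ps_ring N\<^esub> ps_div_var t k"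
  have v: "v \<in> carrier (ps_ring N)" unfolding v_def by (rule ps_var_carrier[OF t])
  have z: "ps_at_zero t r \<in> carrier (ps_ring N)" "ps_at_zero t k \<in> carrier (ps_ring N)"
    using r k by (simp_all add: ps_at_zero_carrier)
  have d: "ps_div_var t r \<in> carrier (ps_ring N)" "ps_div_var t k \<in> carrier (ps_ring N)"
    using r k t by (simp_all add: ps_div_var_carrier)
  have "r \<otimes>\<^bsub>ps_ring N\<^esub> k = ps_at_zero t r \<otimes>\<^bsub>ps_ring N\<^esub> k
        \<oplus>\<^bsub>ps_ring N\<^esub> v \<otimes>\<^bsub>ps_ring N\<^esub> (ps_div_var t r \<otimes>\<^bsub>ps_ring N\<^esub> k)"
    by (subst ps_var_decomp[OF t r]) (simp add: v_def[symmetric] R.l_distr R.m_assoc z d v k)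
  also have "ps_at_zero t r \<otimes>\<^bsub>ps_ring N\<^esub> k = ps_at_zero t r \<otimes>\<^bsub>ps_ring N\<^esub> ps_at_zero t k
        \<oplus>\<^bsub>ps_ring N\<^esub> v \<otimes>\<^bsub>ps_ring N\<^esub> (ps_at_zero t r \<otimes>\<^bsub>ps_ring N\<^esub> ps_div_var t k)"
    by (subst ps_var_decomp[OF t k]) (simp add: v_def[symmetric] R.r_distr R.m_lcomm z d v)
  finally have "r \<otimes>\<^bsub>ps_ring N\<^esub> k
      = ps_at_zero t (r \<otimes>\<^bsub>ps_ring N\<^esub> k) \<oplus>\<^bsub>ps_ring N\<^esub> v \<otimes>\<^bsub>ps_ring N\<^esub> D"
    unfolding D_def ps_at_zero_mult by (simp add: R.r_distr R.a_ac z d v k)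
  then have "ps_div_var t (r \<otimes>\<^bsub>ps_ring N\<^esub> k)
      = ps_div_var t (ps_at_zero t (r \<otimes>\<^bsub>ps_ring N\<^esub> k)) \<oplus>\<^bsub>ps_ring N\<^esub> ps_div_var t (v \<otimes>\<^bsub>ps_ring N\<^esub> D)"
    by (metis ps_div_var_add)
  also have "\<dots> = D"
    unfolding v_def using t z d k by (simp add: D_def ps_div_var_at_zero[of t _ N] ps_div_var_var_mult)
  finally show ?thesis unfolding D_def .
qed

lemma ps_div_var_Idl_closed:
  fixes S :: "(mono \<Rightarrow> 'a::field) set"
  assumes t: "t < N" and S: "S \<subseteq> carrier (ps_ring N)"
    and gen: "\<And>s. s \<in> S \<Longrightarrow> ps_div_var t s \<in> Idl\<^bsub>ps_ring N\<^esub> S"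
    and k: "k \<in> Idl\<^bsub>ps_ring N\<^esub> S"
  shows "ps_div_var t k \<in> Idl\<^bsub>ps_ring N\<^esub> S"
proof -
  interpret R: cring "ps_ring N :: (mono \<Rightarrow> 'a) ring" by (rule cring_ps_ring)
  interpret I: ideal "Idl\<^bsub>ps_ring N\<^esub> S" "ps_ring N" by (rule R.genideal_ideal[OF S])
  let ?T = "{k \<in> Idl\<^bsub>ps_ring N\<^esub> S. ps_div_var t k \<in> Idl\<^bsub>ps_ring N\<^esub> S}"
  have "ideal ?T (ps_ring N)"
  proof (rule idealI)
    show "ring (ps_ring N :: (mono \<Rightarrow> 'a) ring)" by (rule R.ring_axioms)
    show "subgroup ?T (add_monoid (ps_ring N))"
    proof (rule R.add.subgroupI)
      show "?T \<subseteq> carrier (ps_ring N)" using I.Icarr by blast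
      show "?T \<noteq> {}" using ps_div_var_zero[of t N] I.zero_closed by (metis (mono_tags) empty_iff mem_Collect_eq)
    next
      fix a assume a: "a \<in> ?T"
      then have "a \<in> carrier (ps_ring N)" using I.Icarr by blast
      then show "\<ominus>\<^bsub>ps_ring N\<^esub> a \<in> ?T"
        using a I.a_inv_closed by (simp add: ps_div_var_minus[OF t])
    next
      fix a b assume "a \<in> ?T" "b \<in> ?T"
      then show "a \<oplus>\<^bsub>ps_ring N\<^esub> b \<in> ?T" using I.a_closed by (simp add: ps_div_var_add)
    qed
  next
    fix a x :: "mono \<Rightarrow> 'a" assume a: "a \<in> ?T" and x: "x \<in> carrier (ps_ring N)"
    then have ac: "a \<in> carrier (ps_ring N)" using I.Icarr by blast
    have "ps_div_var t (x \<otimes>\<^bsub>ps_ring N\<^esub> a) \<in> Idl\<^bsub>ps_ring N\<^esub> S"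
      unfolding ps_div_var_mult[OF t x ac]
      by (rule I.a_closed; rule I.I_l_closed)
         (use a x ps_at_zero_carrier ps_div_var_carrier[OF t] in auto)
    then show "x \<otimes>\<^bsub>ps_ring N\<^esub> a \<in> ?T" using a x I.I_l_closed by simp
    then show "a \<otimes>\<^bsub>ps_ring N\<^esub> x \<in> ?T" using R.m_comm[OF x ac] by simp
  qed
  moreover have "S \<subseteq> ?T" using gen R.genideal_self[OF S] by blast
  ultimately show ?thesis using k R.genideal_minimal by blast
qed

definition lin_comb :: "('a, 'b) ring_scheme \<Rightarrow> 'a list \<Rightarrow> 'a set" where
  "lin_comb R zs = {finsum R (\<lambda>j. zs ! j \<otimes>\<^bsub>R\<^esub> r j) {..<length zs} | r.
                      r \<in> {..<length zs} \<rightarrow> carrier R}"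

lemma lin_comb_subset_ideal:
  assumes I: "ideal I R" and zs: "set zs \<subseteq> I"
  shows "lin_comb R zs \<subseteq> I"
proof
  interpret ideal I R by (rule I)
  fix l assume "l \<in> lin_comb R zs"
  then obtain r where r: "r \<in> {..<length zs} \<rightarrow> carrier R"
    and l: "l = finsum R (\<lambda>j. zs ! j \<otimes>\<^bsub>R\<^esub> r j) {..<length zs}"
    by (auto simp: lin_comb_def)
  have "finsum R (\<lambda>j. zs ! j \<otimes>\<^bsub>R\<^esub> r j) {..<k} \<in> I" if "k \<le> length zs" for k
    using that
  proof (induction k)
    case 0 then show ?case by (simp add: finsum_empty)
  next
    case (Suc k)
    have zI: "zs ! j \<otimes>\<^bsub>R\<^esub> r j \<in> I" if "j < length zs" for j
      using that zs r by (intro I_r_closed) auto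
    have "finsum R (\<lambda>j. zs ! j \<otimes>\<^bsub>R\<^esub> r j) {..<Suc k}
        = zs ! k \<otimes>\<^bsub>R\<^esub> r k \<oplus>\<^bsub>R\<^esub> finsum R (\<lambda>j. zs ! j \<otimes>\<^bsub>R\<^esub> r j) {..<k}"
      unfolding lessThan_Suc
      by (rule finsum_insert) (use Suc.prems zI Icarr in fastforce)+
    then show ?case using Suc zI a_closed by simp
  qed
  then show "l \<in> I" unfolding l by simp
qed

lemma finsum_hom_lessThan:
  fixes A (structure) and B (structure) and k :: nat
  assumes A: "abelian_monoid A" and B: "abelian_monoid B"
    and h_add: "\<And>x y. x \<in> carrier A \<Longrightarrow> y \<in> carrier A \<Longrightarrow> h (x \<oplus>\<^bsub>A\<^esub> y) = h x \<oplus>\<^bsub>B\<^esub> h y"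
    and h_zero: "h \<zero>\<^bsub>A\<^esub> = \<zero>\<^bsub>B\<^esub>" and h_carr: "\<And>x. x \<in> carrier A \<Longrightarrow> h x \<in> carrier B"
    and f: "f \<in> {..<k} \<rightarrow> carrier A"
  shows "finsum B (\<lambda>j. h (f j)) {..<k} = h (finsum A f {..<k})"
  using f
proof (induction k)
  case 0
  show ?case
    by (simp only: lessThan_0 abelian_monoid.finsum_empty[OF A] abelian_monoid.finsum_empty[OF B] h_zero)
next
  case (Suc k)
  have f: "f \<in> {..<k} \<rightarrow> carrier A" "f k \<in> carrier A" using Suc.prems by auto
  have hf: "(\<lambda>j. h (f j)) \<in> {..<k} \<rightarrow> carrier B" "h (f k) \<in> carrier B" using f h_carr by auto
  have "finsum B (\<lambda>j. h (f j)) {..<Suc k} = h (f k) \<oplus>\<^bsub>B\<^esub> finsum B (\<lambda>j. h (f j)) {..<k}"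
    unfolding lessThan_Suc by (rule abelian_monoid.finsum_insert[OF B]) (use hf in auto)
  also have "\<dots> = h (f k) \<oplus>\<^bsub>B\<^esub> h (finsum A f {..<k})" using Suc.IH f by simp
  also have "\<dots> = h (f k \<oplus>\<^bsub>A\<^esub> finsum A f {..<k})"
    using h_add f abelian_monoid.finsum_closed[OF A f(1)] by simp
  also have "f k \<oplus>\<^bsub>A\<^esub> finsum A f {..<k} = finsum A f {..<Suc k}"
    unfolding lessThan_Suc by (rule abelian_monoid.finsum_insert[OF A, symmetric]) (use f in auto)
  finally show ?case .
qed

lemma ps_div_var_lin_comb:
  fixes l :: "mono \<Rightarrow> 'a::field"
  assumes t: "t < N" and js: "\<forall>s\<in>set js. s < N \<and> s \<noteq> t"
    and l: "l \<in> lin_comb (ps_ring N) (map ps_var js)"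
  shows "ps_div_var t l \<in> lin_comb (ps_ring N) (map ps_var js)"
proof -
  interpret R: cring "ps_ring N :: (mono \<Rightarrow> 'a) ring" by (rule cring_ps_ring)
  let ?zs = "map ps_var js :: (mono \<Rightarrow> 'a) list"
  obtain r where r: "r \<in> {..<length ?zs} \<rightarrow> carrier (ps_ring N)"
    and l: "l = finsum (ps_ring N) (\<lambda>j. ?zs ! j \<otimes>\<^bsub>ps_ring N\<^esub> r j) {..<length ?zs}"
    using l by (auto simp: lin_comb_def)
  have zc: "?zs ! j \<in> carrier (ps_ring N)" and rc: "r j \<in> carrier (ps_ring N)"
    and free: "ps_free_of t (?zs ! j)" if "j < length ?zs" for j
    using that js r by (auto simp: ps_var_carrier ps_free_of_var)
  have "ps_div_var t l
      = finsum (ps_ring N) (\<lambda>j. ps_div_var t (?zs ! j \<otimes>\<^bsub>ps_ring N\<^esub> r j)) {..<length ?zs}"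
    unfolding l
    by (rule finsum_hom_lessThan[OF R.abelian_monoid_axioms R.abelian_monoid_axioms, symmetric])
       (use zc rc in \<open>auto simp: ps_div_var_add ps_div_var_zero ps_div_var_carrier[OF t]\<close>)
  also have "\<dots> = finsum (ps_ring N) (\<lambda>j. ?zs ! j \<otimes>\<^bsub>ps_ring N\<^esub> ps_div_var t (r j)) {..<length ?zs}"
  proof (rule R.finsum_cong'[OF refl])
    show "(\<lambda>j. ?zs ! j \<otimes>\<^bsub>ps_ring N\<^esub> ps_div_var t (r j)) \<in> {..<length ?zs} \<rightarrow> carrier (ps_ring N)"
      using zc rc ps_div_var_carrier[OF t] by (auto intro!: R.m_closed)
  next
    fix j assume "j \<in> {..<length ?zs}"
    then have j: "?zs ! j \<in> carrier (ps_ring N)" "r j \<in> carrier (ps_ring N)" "ps_free_of t (?zs ! j)"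
      using zc rc free by auto
    then have "?zs ! j \<otimes>\<^bsub>ps_ring N\<^esub> ps_div_var t (r j) \<in> carrier (ps_ring N)"
      using ps_div_var_carrier[OF t] by blast
    then show "ps_div_var t (?zs ! j \<otimes>\<^bsub>ps_ring N\<^esub> r j) = ?zs ! j \<otimes>\<^bsub>ps_ring N\<^esub> ps_div_var t (r j)"
      using j by (simp add: ps_div_var_mult[OF t] ps_div_var_free_of[of t _ N] ps_at_zero_free_of)
  qed
  finally show ?thesis unfolding lin_comb_def using rc ps_div_var_carrier[OF t]
    by (auto intro!: exI[of _ "\<lambda>j. ps_div_var t (r j)"])
qed

text \<open>Apply \<open>ps_div_var t\<close> to \<open>z\<^sub>t x = l + c\<close> with \<open>c \<in> I\<close>; the image of \<open>l\<close> is again a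
  combination of the other variables.\<close>

lemma ps_var_cancel:
  fixes x l :: "mono \<Rightarrow> 'a::field"
  assumes t: "t < N" and I: "ideal I (ps_ring N)"
    and I_div: "\<And>c. c \<in> I \<Longrightarrow> ps_div_var t c \<in> I"
    and js: "\<forall>s\<in>set js. s < N \<and> s \<noteq> t"
    and x: "x \<in> carrier (ps_ring N)" and l: "l \<in> lin_comb (ps_ring N) (map ps_var js)"
    and c: "ps_var t \<otimes>\<^bsub>ps_ring N\<^esub> x \<ominus>\<^bsub>ps_ring N\<^esub> l \<in> I"
  shows "\<exists>l'\<in>lin_comb (ps_ring N) (map ps_var js). x \<ominus>\<^bsub>ps_ring N\<^esub> l' \<in> I"
proof
  interpret R: cring "ps_ring N :: (mono \<Rightarrow> 'a) ring" by (rule cring_ps_ring)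
  interpret I: ideal I "ps_ring N" by (rule I)
  define c where "c = ps_var t \<otimes>\<^bsub>ps_ring N\<^esub> x \<ominus>\<^bsub>ps_ring N\<^esub> l"
  have v: "ps_var t \<in> carrier (ps_ring N)" by (rule ps_var_carrier[OF t])
  have "set (map ps_var js) \<subseteq> carrier (ps_ring N)" using js ps_var_carrier by auto
  then have lc: "l \<in> carrier (ps_ring N)" using lin_comb_subset_ideal[OF R.oneideal] l by blast
  have cc: "c \<in> carrier (ps_ring N)" unfolding c_def using v x lc by (intro R.minus_closed R.m_closed)
  have "ps_var t \<otimes>\<^bsub>ps_ring N\<^esub> x = l \<oplus>\<^bsub>ps_ring N\<^esub> c"
    unfolding c_def using R.m_closed[OF v x] lc by (simp add: R.minus_eq R.a_lcomm[of l] R.r_neg)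
  then have "x = ps_div_var t l \<oplus>\<^bsub>ps_ring N\<^esub> ps_div_var t c"
    using ps_div_var_var_mult[OF t x] by (simp add: ps_div_var_add)
  moreover have "ps_div_var t l \<in> carrier (ps_ring N)" "ps_div_var t c \<in> carrier (ps_ring N)"
    using ps_div_var_carrier[OF t] lc cc by auto
  ultimately have "x \<ominus>\<^bsub>ps_ring N\<^esub> ps_div_var t l = ps_div_var t c" by algebra
  then show "x \<ominus>\<^bsub>ps_ring N\<^esub> ps_div_var t l \<in> I" using I_div c c_def by simp
  show "ps_div_var t l \<in> lin_comb (ps_ring N) (map ps_var js)" by (rule ps_div_var_lin_comb[OF t js l])
qed

definition ps_max_ideal :: "nat \<Rightarrow> (mono \<Rightarrow> 'a::field) set" where
  "ps_max_ideal N = {f \<in> carrier (ps_ring N). f (\<lambda>i. 0) = 0}"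

lemma ps_mult_at_origin:
  fixes f g :: "mono \<Rightarrow> 'a::field"
  shows "(f \<otimes>\<^bsub>ps_ring N\<^esub> g) (\<lambda>i. 0) = f (\<lambda>i. 0) * g (\<lambda>i. 0)"
proof -
  have "mono_below (\<lambda>i. 0) = {\<lambda>i. 0}" by (auto simp: fun_eq_iff)
  moreover have "mono_in {..<N} (\<lambda>i. 0)" by (simp add: mono_in_def)
  ultimately show ?thesis by (simp add: ps_ring_simps)
qed

lemma ideal_ps_max_ideal: "ideal (ps_max_ideal N) (ps_ring N :: (mono \<Rightarrow> 'a::field) ring)"
proof -
  interpret R: cring "ps_ring N :: (mono \<Rightarrow> 'a) ring" by (rule cring_ps_ring)
  show ?thesis
  proof (rule idealI)
    show "ring (ps_ring N :: (mono \<Rightarrow> 'a) ring)" by (rule R.ring_axioms)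
    show "subgroup (ps_max_ideal N) (add_monoid (ps_ring N :: (mono \<Rightarrow> 'a) ring))"
    proof (rule R.add.subgroupI)
      show "ps_max_ideal N \<subseteq> carrier (ps_ring N)" by (auto simp: ps_max_ideal_def)
      show "(ps_max_ideal N :: (mono \<Rightarrow> 'a) set) \<noteq> {}"
        using R.zero_closed by (auto simp: ps_max_ideal_def ps_ring_simps)
    next
      fix a :: "mono \<Rightarrow> 'a" assume "a \<in> ps_max_ideal N"
      then show "\<ominus>\<^bsub>ps_ring N\<^esub> a \<in> ps_max_ideal N"
        by (auto simp: ps_max_ideal_def ps_minus) (auto simp: ps_ring_simps)
    next
      fix a b :: "mono \<Rightarrow> 'a" assume "a \<in> ps_max_ideal N" "b \<in> ps_max_ideal N"
      then show "a \<oplus>\<^bsub>ps_ring N\<^esub> b \<in> ps_max_ideal N"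
        by (auto simp: ps_max_ideal_def ps_ring_simps, metis add.right_neutral)
    qed
  next
    fix a x :: "mono \<Rightarrow> 'a" assume "a \<in> ps_max_ideal N" "x \<in> carrier (ps_ring N)"
    then show "x \<otimes>\<^bsub>ps_ring N\<^esub> a \<in> ps_max_ideal N" "a \<otimes>\<^bsub>ps_ring N\<^esub> x \<in> ps_max_ideal N"
      by (auto simp: ps_max_ideal_def ps_mult_at_origin)
  qed
qed

lemma ps_var_in_max_ideal: "s < N \<Longrightarrow> (ps_var s :: mono \<Rightarrow> 'a::field) \<in> ps_max_ideal N"
  using ps_var_carrier[of s N] by (auto simp: ps_max_ideal_def ps_var_def fun_eq_iff)

lemma ps_one_notin_max_ideal: "\<one>\<^bsub>ps_ring N\<^esub> \<notin> (ps_max_ideal N :: (mono \<Rightarrow> 'a::field) set)"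
  by (simp add: ps_max_ideal_def ps_ring_simps)

section \<open>Fiber products of quotient rings\<close>

lemma rcos_eq_iff:
  assumes "ideal I R" "x \<in> carrier R" "y \<in> carrier R"
  shows "I +>\<^bsub>R\<^esub> x = I +>\<^bsub>R\<^esub> y \<longleftrightarrow> x \<ominus>\<^bsub>R\<^esub> y \<in> I"
proof -
  interpret ideal I R by fact
  show ?thesis
    by (metis a_rcos_module_minus a_rcos_self a_repr_independence' assms(2,3) ring_axioms)
qed

text \<open>The hypothesis \<open>I0 \<subseteq> I1 <+> I2\<close> makes \<open>R\<close> surject onto the fiber product, so
  that it is the quotient \<open>R/(I1 \<inter> I2)\<close>.\<close>

locale fiber_product_quotient =
  fixes R (structure) and I1 I2 I0
  assumes cring: "cring R"
    and I1: "ideal I1 R" and I2: "ideal I2 R" and I0: "ideal I0 R"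
    and I0_subset: "I0 \<subseteq> I1 <+>\<^bsub>R\<^esub> I2"
begin

sublocale cring R by (rule cring)

abbreviation M where "M \<equiv> fiber_product_module R I1 I2 I0"

definition fp_class :: "'a \<Rightarrow> 'a set \<times> 'a set" where
  "fp_class r = (I1 +> r, I2 +> r)"

lemma fp_class_eq_iff:
  "x \<in> carrier R \<Longrightarrow> y \<in> carrier R \<Longrightarrow> fp_class x = fp_class y \<longleftrightarrow> x \<ominus> y \<in> I1 \<inter> I2"
  unfolding fp_class_def using rcos_eq_iff[OF I1] rcos_eq_iff[OF I2] by simp

lemma carrier_fiber_product: "carrier M = fp_class ` carrier R"
proof
  show "fp_class ` carrier R \<subseteq> carrier M"
  proof
    fix z assume "z \<in> fp_class ` carrier R"
    then obtain r where r: "r \<in> carrier R" and z: "z = fp_class r" by blast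
    have "r \<ominus> r = \<zero>" using r by algebra
    then have "r \<ominus> r \<in> I0" using additive_subgroup.zero_closed[OF ideal.axioms(1)[OF I0]] by simp
    then show "z \<in> carrier M" using r unfolding z fp_class_def fiber_product_module_def by auto
  qed
next
  show "carrier M \<subseteq> fp_class ` carrier R"
  proof
    fix z assume "z \<in> carrier M"
    then obtain a b where a: "a \<in> carrier R" and b: "b \<in> carrier R" and z: "z = (I1 +> a, I2 +> b)"
      and ab: "a \<ominus> b \<in> I0" by (auto simp: fiber_product_module_def)
    obtain \<beta> \<alpha> where be: "\<beta> \<in> I1" and al: "\<alpha> \<in> I2" and d: "a \<ominus> b = \<beta> \<oplus> \<alpha>"
      using I0_subset ab unfolding set_add_def' by blast
    have alc: "\<alpha> \<in> carrier R" using al ideal.Icarr[OF I2] by blast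
    have bec: "\<beta> \<in> carrier R" using be ideal.Icarr[OF I1] by blast
    define r where "r = a \<ominus> \<beta>"
    have rc: "r \<in> carrier R" unfolding r_def using a bec by simp
    have "r \<ominus> a = \<ominus> \<beta>" unfolding r_def using a bec by algebra
    then have 1: "I1 +> r = I1 +> a"
      using rcos_eq_iff[OF I1 rc a] be additive_subgroup.a_inv_closed[OF ideal.axioms(1)[OF I1]] by simp
    have "r \<ominus> b = (a \<ominus> b) \<ominus> \<beta>" unfolding r_def using a b bec by algebra
    also have "\<dots> = \<alpha>" unfolding d using alc bec by algebra
    finally have 2: "I2 +> r = I2 +> b" using rcos_eq_iff[OF I2 rc b] al by simp
    show "z \<in> fp_class ` carrier R" using 1 2 z rc unfolding fp_class_def by auto
  qed
qed

lemma fp_class_carrier: "x \<in> carrier R \<Longrightarrow> fp_class x \<in> carrier M"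
  using carrier_fiber_product by blast

lemma fp_class_add:
  "x \<in> carrier R \<Longrightarrow> y \<in> carrier R \<Longrightarrow> fp_class x \<oplus>\<^bsub>M\<^esub> fp_class y = fp_class (x \<oplus> y)"
  using ring_hom_add[OF ideal.rcos_ring_hom[OF I1]] ring_hom_add[OF ideal.rcos_ring_hom[OF I2]]
  by (simp add: fp_class_def fiber_product_module_def)

lemma fp_class_smult:
  "r \<in> carrier R \<Longrightarrow> x \<in> carrier R \<Longrightarrow> r \<odot>\<^bsub>M\<^esub> fp_class x = fp_class (r \<otimes> x)"
  using ring_hom_mult[OF ideal.rcos_ring_hom[OF I1]] ring_hom_mult[OF ideal.rcos_ring_hom[OF I2]]
  by (simp add: fp_class_def fiber_product_module_def)

lemma fp_class_zero: "\<zero>\<^bsub>M\<^esub> = fp_class \<zero>"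
proof -
  interpret A: ideal I1 R by (rule I1)
  interpret B: ideal I2 R by (rule I2)
  show ?thesis using A.a_rcos_const[OF A.zero_closed] B.a_rcos_const[OF B.zero_closed]
    by (simp add: fp_class_def fiber_product_module_def)
qed

lemma abelian_monoid_fiber_product: "abelian_monoid M"
proof (rule abelian_monoidI)
  fix x y assume "x \<in> carrier M" "y \<in> carrier M"
  then obtain a b where a: "a \<in> carrier R" "x = fp_class a" and b: "b \<in> carrier R" "y = fp_class b"
    unfolding carrier_fiber_product by (elim imageE) simp
  show "x \<oplus>\<^bsub>M\<^esub> y \<in> carrier M" using a b fp_class_add fp_class_carrier by simp
  show "x \<oplus>\<^bsub>M\<^esub> y = y \<oplus>\<^bsub>M\<^esub> x" using a b fp_class_add[of a b] fp_class_add[of b a] a_comm[of a b] by simp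
next
  show "\<zero>\<^bsub>M\<^esub> \<in> carrier M" using fp_class_zero fp_class_carrier by simp
next
  fix x y z assume "x \<in> carrier M" "y \<in> carrier M" "z \<in> carrier M"
  then obtain a b c where a: "a \<in> carrier R" "x = fp_class a" and b: "b \<in> carrier R" "y = fp_class b"
     and c: "c \<in> carrier R" "z = fp_class c"
    unfolding carrier_fiber_product by (elim imageE) simp
  show "x \<oplus>\<^bsub>M\<^esub> y \<oplus>\<^bsub>M\<^esub> z = x \<oplus>\<^bsub>M\<^esub> (y \<oplus>\<^bsub>M\<^esub> z)"
    using a b c fp_class_add[of a b] fp_class_add[of "a \<oplus> b" c] fp_class_add[of b c]
      fp_class_add[of a "b \<oplus> c"] a_assoc[of a b c] by simp
next
  fix x assume "x \<in> carrier M"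
  then obtain a where a: "a \<in> carrier R" "x = fp_class a" unfolding carrier_fiber_product by (elim imageE) simp
  show "\<zero>\<^bsub>M\<^esub> \<oplus>\<^bsub>M\<^esub> x = x" using a fp_class_add[of "\<zero>" a] fp_class_zero by simp
qed

lemma finsum_fp_class:
  fixes k :: nat
  assumes "f \<in> {..<k} \<rightarrow> carrier R"
  shows "finsum M (\<lambda>j. fp_class (f j)) {..<k} = fp_class (finsum R f {..<k})"
  by (rule finsum_hom_lessThan[OF abelian_group.axioms(1)[OF is_abelian_group]
        abelian_monoid_fiber_product])
     (use assms fp_class_add fp_class_zero fp_class_carrier in auto)

lemma submod_gen_fiber_product:
  assumes zs: "set zs \<subseteq> carrier R"
  shows "submod_gen M zs = fp_class ` lin_comb R zs"
proof
  have zc: "zs ! j \<in> carrier R" if "j < length zs" for j using zs that by auto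
  show "submod_gen M zs \<subseteq> fp_class ` lin_comb R zs"
  proof
    fix x assume "x \<in> submod_gen M zs"
    then obtain v where v: "v \<in> {..<length zs} \<rightarrow> carrier M"
      and x: "x = finsum M (\<lambda>j. zs ! j \<odot>\<^bsub>M\<^esub> v j) {..<length zs}"
      by (auto simp: submod_gen_def)
    define r where "r j = (SOME a. a \<in> carrier R \<and> v j = fp_class a)" for j
    have r: "r j \<in> carrier R \<and> v j = fp_class (r j)" if "j < length zs" for j
    proof -
      have "\<exists>a. a \<in> carrier R \<and> v j = fp_class a" using v that carrier_fiber_product by auto
      then show ?thesis unfolding r_def by (rule someI_ex)
    qed
    have "x = finsum M (\<lambda>j. fp_class (zs ! j \<otimes> r j)) {..<length zs}"
      unfolding x
      by (rule abelian_monoid.finsum_cong'[OF abelian_monoid_fiber_product refl])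
         (use r zc in \<open>auto simp: fp_class_smult fp_class_carrier\<close>)
    also have "\<dots> = fp_class (finsum R (\<lambda>j. zs ! j \<otimes> r j) {..<length zs})"
      by (rule finsum_fp_class) (use r zc in auto)
    finally show "x \<in> fp_class ` lin_comb R zs"
      unfolding lin_comb_def using r by blast
  qed
  show "fp_class ` lin_comb R zs \<subseteq> submod_gen M zs"
  proof
    fix x assume "x \<in> fp_class ` lin_comb R zs"
    then obtain r where r: "r \<in> {..<length zs} \<rightarrow> carrier R"
      and x: "x = fp_class (finsum R (\<lambda>j. zs ! j \<otimes> r j) {..<length zs})"
      by (auto simp: lin_comb_def)
    have rc: "r j \<in> carrier R" if "j < length zs" for j using r that by auto
    have "x = finsum M (\<lambda>j. fp_class (zs ! j \<otimes> r j)) {..<length zs}"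
      unfolding x by (rule finsum_fp_class[symmetric]) (use r zc in auto)
    also have "\<dots> = finsum M (\<lambda>j. zs ! j \<odot>\<^bsub>M\<^esub> fp_class (r j)) {..<length zs}"
      by (rule abelian_monoid.finsum_cong'[OF abelian_monoid_fiber_product refl])
         (use rc zc in \<open>auto simp: fp_class_smult fp_class_carrier\<close>)
    finally show "x \<in> submod_gen M zs"
      unfolding submod_gen_def using r fp_class_carrier by (auto intro!: exI[of _ "\<lambda>j. fp_class (r j)"])
  qed
qed

lemma regular_sequence_fiber_productI:
  assumes zs: "set zs \<subseteq> carrier R"
    and cancel: "\<And>i x l. i < length zs \<Longrightarrow> x \<in> carrier R \<Longrightarrow> l \<in> lin_comb R (take i zs) \<Longrightarrow>
                   zs ! i \<otimes> x \<ominus> l \<in> I1 \<inter> I2 \<Longrightarrow> \<exists>l'\<in>lin_comb R (take i zs). x \<ominus> l' \<in> I1 \<inter> I2"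
    and proper: "\<And>l. l \<in> lin_comb R zs \<Longrightarrow> \<one> \<ominus> l \<notin> I1"
  shows "regular_sequence R M zs"
  unfolding regular_sequence_def
proof (intro conjI allI impI ballI)
  show "set zs \<subseteq> carrier R" by (rule zs)
next
  fix i v assume i: "i < length zs" and v: "v \<in> carrier M"
    and zv: "zs ! i \<odot>\<^bsub>M\<^esub> v \<in> submod_gen M (take i zs)"
  have zs_i: "set (take i zs) \<subseteq> carrier R" using zs by (meson order_trans set_take_subset)
  have lin_i: "lin_comb R (take i zs) \<subseteq> carrier R"
    by (rule lin_comb_subset_ideal[OF oneideal zs_i])
  obtain x where x: "x \<in> carrier R" and vx: "v = fp_class x" using v carrier_fiber_product by auto
  have zi: "zs ! i \<in> carrier R" using zs i by auto
  obtain l where l: "l \<in> lin_comb R (take i zs)" and "fp_class (zs ! i \<otimes> x) = fp_class l"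
    using zv unfolding vx submod_gen_fiber_product[OF zs_i] fp_class_smult[OF zi x] by auto
  then have "zs ! i \<otimes> x \<ominus> l \<in> I1 \<inter> I2" using fp_class_eq_iff zi x lin_i by auto
  then obtain l' where l': "l' \<in> lin_comb R (take i zs)" and "x \<ominus> l' \<in> I1 \<inter> I2"
    using cancel[OF i x l] by blast
  then have "fp_class x = fp_class l'" using fp_class_eq_iff x lin_i by auto
  then show "v \<in> submod_gen M (take i zs)"
    unfolding vx submod_gen_fiber_product[OF zs_i] using l' by auto
next
  show "submod_gen M zs \<noteq> carrier M"
  proof
    assume "submod_gen M zs = carrier M"
    then obtain l where l: "l \<in> lin_comb R zs" and "fp_class \<one> = fp_class l"
      using fp_class_carrier[of \<one>] unfolding submod_gen_fiber_product[OF zs] by auto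
    then have "\<one> \<ominus> l \<in> I1" using fp_class_eq_iff lin_comb_subset_ideal[OF oneideal zs] by auto
    then show False using proper[OF l] by blast
  qed
qed

end

section \<open>Regular sequences of variables\<close>

lemma (in ring) Idl_Un_Idl:
  assumes "S \<subseteq> carrier R" "T \<subseteq> carrier R"
  shows "Idl (Idl S \<union> T) = Idl (S \<union> T)"
proof
  have "Idl S \<subseteq> Idl (S \<union> T)" using assms by (intro subset_Idl_subset) auto
  then show "Idl (Idl S \<union> T) \<subseteq> Idl (S \<union> T)"
    using assms genideal_self[of "S \<union> T"] by (intro genideal_minimal genideal_ideal) auto
  have "Idl S \<subseteq> carrier R" using ideal.Icarr[OF genideal_ideal[OF assms(1)]] by blast
  moreover have "S \<subseteq> Idl S" using assms(1) by (rule genideal_self)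
  ultimately show "Idl (S \<union> T) \<subseteq> Idl (Idl S \<union> T)"
    using assms(2) by (intro subset_Idl_subset) auto
qed

lemma ps_div_var_Idl_Un_Idl_closed:
  fixes S :: "(mono \<Rightarrow> 'a::field) set"
  assumes t: "t < N" and S: "S \<subseteq> carrier (ps_ring N)" and free: "\<forall>s\<in>S. ps_free_of t s"
    and k: "k \<in> Idl\<^bsub>ps_ring N\<^esub> (Idl\<^bsub>ps_ring N\<^esub> S \<union> T)"
    and T: "T \<subseteq> carrier (ps_ring N)" and free_T: "\<forall>s\<in>T. ps_free_of t s"
  shows "ps_div_var t k \<in> Idl\<^bsub>ps_ring N\<^esub> (Idl\<^bsub>ps_ring N\<^esub> S \<union> T)"
proof -
  interpret cring "ps_ring N :: (mono \<Rightarrow> 'a) ring" by (rule cring_ps_ring)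
  have ST: "S \<union> T \<subseteq> carrier (ps_ring N)" using S T by blast
  have "ps_div_var t s \<in> Idl\<^bsub>ps_ring N\<^esub> (S \<union> T)" if "s \<in> S \<union> T" for s
    using that free free_T ps_div_var_free_of[of t s N] genideal_ideal[OF ST]
    by (auto intro: additive_subgroup.zero_closed[OF ideal.axioms(1)])
  then show ?thesis
    using ps_div_var_Idl_closed[OF t ST] k unfolding Idl_Un_Idl[OF S T] by blast
qed

lemma regular_sequence_ps_vars:
  fixes I1 I2 I0 :: "(mono \<Rightarrow> 'a::field) set"
  assumes fp: "fiber_product_quotient (ps_ring N) I1 I2 I0"
    and ids: "distinct ids" "set ids \<subseteq> {..<N}"
    and div: "\<And>t c. t \<in> set ids \<Longrightarrow> c \<in> I1 \<inter> I2 \<Longrightarrow> ps_div_var t c \<in> I1 \<inter> I2"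
    and I1_max: "I1 \<subseteq> ps_max_ideal N"
  shows "regular_sequence (ps_ring N) (fiber_product_module (ps_ring N) I1 I2 I0) (map ps_var ids)"
proof -
  interpret fiber_product_quotient "ps_ring N" I1 I2 I0 by (rule fp)
  interpret max: ideal "ps_max_ideal N" "ps_ring N" by (rule ideal_ps_max_ideal)
  have I12: "ideal (I1 \<inter> I2) (ps_ring N)" by (rule i_intersect[OF I1 I2])
  have vars: "set (map ps_var ids) \<subseteq> ps_max_ideal N"
    using ids(2) by (auto intro!: ps_var_in_max_ideal)
  show ?thesis
  proof (rule regular_sequence_fiber_productI)
    show "set (map ps_var ids) \<subseteq> carrier (ps_ring N)" using ids(2) ps_var_carrier by auto
  next
    fix i x l assume i: "i < length (map ps_var ids)" and x: "x \<in> carrier (ps_ring N)"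
      and l: "l \<in> lin_comb (ps_ring N) (take i (map ps_var ids))"
      and c: "map ps_var ids ! i \<otimes>\<^bsub>ps_ring N\<^esub> x \<ominus>\<^bsub>ps_ring N\<^esub> l \<in> I1 \<inter> I2"
    have i': "i < length ids" using i by simp
    then have t: "ids ! i < N" "ids ! i \<in> set ids" using ids(2) nth_mem by (blast, blast)
    have "ids ! i \<notin> set (take i ids)"
      using ids(1) i' by (metis Cons_nth_drop_Suc append_take_drop_id disjoint_iff
          distinct_append list.set_intros(1))
    then have "\<forall>s\<in>set (take i ids). s < N \<and> s \<noteq> ids ! i"
      using ids(2) by (auto dest: in_set_takeD)
    from ps_var_cancel[OF t(1) I12 div[OF t(2)] this x]
    show "\<exists>l'\<in>lin_comb (ps_ring N) (take i (map ps_var ids)). x \<ominus>\<^bsub>ps_ring N\<^esub> l' \<in> I1 \<inter> I2"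
      using l c i' unfolding take_map by simp
  next
    fix l :: "mono \<Rightarrow> 'a"
    assume "l \<in> lin_comb (ps_ring N) (map ps_var ids)"
    then have l: "l \<in> ps_max_ideal N" using lin_comb_subset_ideal[OF ideal_ps_max_ideal vars] by blast
    show "\<one>\<^bsub>ps_ring N\<^esub> \<ominus>\<^bsub>ps_ring N\<^esub> l \<notin> I1"
    proof
      assume "\<one>\<^bsub>ps_ring N\<^esub> \<ominus>\<^bsub>ps_ring N\<^esub> l \<in> I1"
      then have "(\<one>\<^bsub>ps_ring N\<^esub> \<ominus>\<^bsub>ps_ring N\<^esub> l) \<oplus>\<^bsub>ps_ring N\<^esub> l \<in> ps_max_ideal N"
        using I1_max l max.a_closed by blast
      moreover have "(\<one>\<^bsub>ps_ring N\<^esub> \<ominus>\<^bsub>ps_ring N\<^esub> l) \<oplus>\<^bsub>ps_ring N\<^esub> l = \<one>\<^bsub>ps_ring N\<^esub>"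
        using max.Icarr[OF l] by algebra
      ultimately show False using ps_one_notin_max_ideal by metis
    qed
  qed
qed

lemma regular_sequence_ps_blocks:
  fixes N :: nat and V V' :: "nat set" and G G' :: "(mono \<Rightarrow> 'a::field) set"
  defines "R \<equiv> ps_ring N :: (mono \<Rightarrow> 'a) ring"
  assumes V: "V \<subseteq> {..<N}" and V': "V' \<subseteq> {..<N}"
    and G: "G \<subseteq> carrier R" "\<forall>g\<in>G. \<forall>m. g m \<noteq> 0 \<longrightarrow> mono_in V m"
    and G': "G' \<subseteq> carrier R" "\<forall>g\<in>G'. \<forall>m. g m \<noteq> 0 \<longrightarrow> mono_in V' m"
    and G_max: "Idl\<^bsub>R\<^esub> G \<subseteq> ps_max_ideal N"
    and ids: "distinct ids" "set ids \<subseteq> {..<N} - (V \<union> V')"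
  shows "regular_sequence R
           (fiber_product_module R (Idl\<^bsub>R\<^esub> (Idl\<^bsub>R\<^esub> G \<union> ps_var ` V')) (Idl\<^bsub>R\<^esub> (ps_var ` V \<union> Idl\<^bsub>R\<^esub> G'))
              (Idl\<^bsub>R\<^esub> (ps_var ` V \<union> ps_var ` V')))
           (map ps_var ids)"
proof -
  interpret cring R unfolding R_def by (rule cring_ps_ring)
  define I1 where "I1 = Idl\<^bsub>R\<^esub> (Idl\<^bsub>R\<^esub> G \<union> ps_var ` V')"
  define I2 where "I2 = Idl\<^bsub>R\<^esub> (Idl\<^bsub>R\<^esub> G' \<union> ps_var ` V)"
  define I0 where "I0 = Idl\<^bsub>R\<^esub> (ps_var ` V \<union> ps_var ` V')"
  have X: "ps_var ` V \<subseteq> carrier R" and Y: "ps_var ` V' \<subseteq> carrier R"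
    using V V' ps_var_carrier unfolding R_def by blast+
  have IG: "Idl\<^bsub>R\<^esub> G \<subseteq> carrier R" "Idl\<^bsub>R\<^esub> G' \<subseteq> carrier R"
    using ideal.Icarr[OF genideal_ideal[OF G(1)]] ideal.Icarr[OF genideal_ideal[OF G'(1)]] by blast+
  have I1: "ideal I1 R" and I2: "ideal I2 R" and I0: "ideal I0 R"
    unfolding I1_def I2_def I0_def by (rule genideal_ideal; use IG X Y in blast)+
  have "ps_var ` V \<union> ps_var ` V' \<subseteq> I1 \<union> I2"
    using genideal_self[of "Idl\<^bsub>R\<^esub> G \<union> ps_var ` V'"] genideal_self[of "Idl\<^bsub>R\<^esub> G' \<union> ps_var ` V"] IG X Y
    unfolding I1_def I2_def by blast
  then have "I0 \<subseteq> I1 <+>\<^bsub>R\<^esub> I2"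
    unfolding I0_def union_genideal[OF I1 I2, symmetric]
    using ideal.Icarr[OF I1] ideal.Icarr[OF I2] by (intro subset_Idl_subset) blast+
  then have fp: "fiber_product_quotient R I1 I2 I0"
    by (intro fiber_product_quotient.intro is_cring I1 I2 I0)
  have div: "ps_div_var t c \<in> I1 \<inter> I2" if t: "t \<in> set ids" and c: "c \<in> I1 \<inter> I2" for t c
  proof -
    have tN: "t < N" and "t \<notin> V" "t \<notin> V'" using t ids(2) by auto
    then have X_free: "\<forall>s\<in>ps_var ` V. ps_free_of t s" and Y_free: "\<forall>s\<in>ps_var ` V'. ps_free_of t s"
      and G_free: "\<forall>g\<in>G. ps_free_of t g" and G'_free: "\<forall>g\<in>G'. ps_free_of t g"
      using G(2) G'(2) by (auto intro: ps_free_of_var ps_free_of_mono_in[of _ V] ps_free_of_mono_in[of _ V'])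
    have "ps_div_var t c \<in> I1"
      using ps_div_var_Idl_Un_Idl_closed[OF tN G(1)[unfolded R_def] G_free _ Y[unfolded R_def] Y_free] c
      unfolding I1_def R_def by blast
    moreover have "ps_div_var t c \<in> I2"
      using ps_div_var_Idl_Un_Idl_closed[OF tN G'(1)[unfolded R_def] G'_free _ X[unfolded R_def] X_free] c
      unfolding I2_def R_def by blast
    ultimately show ?thesis by blast
  qed
  have max: "ideal (ps_max_ideal N) R" unfolding R_def by (rule ideal_ps_max_ideal)
  have "ps_var ` V' \<subseteq> ps_max_ideal N" using V' ps_var_in_max_ideal by blast
  then have "I1 \<subseteq> ps_max_ideal N" unfolding I1_def using G_max by (intro genideal_minimal[OF max]) blast
  then have "regular_sequence R (fiber_product_module R I1 I2 I0) (map ps_var ids)"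
    using regular_sequence_ps_vars[OF fp[unfolded R_def] ids(1) _ div] ids(2) unfolding R_def by blast
  then show ?thesis unfolding I1_def I2_def I0_def by (simp add: Un_commute)
qed

theorem lemma3p4:
  fixes n n' p q :: nat
    and J J' :: "(mono \<Rightarrow> 'a::field) set"
  defines "R \<equiv> (ps_ring (n + n') :: (mono \<Rightarrow> 'a) ring)"
    and "xt \<equiv> {ps_var i | i. p \<le> i \<and> i < n}"
    and "yt \<equiv> {ps_var (n + j) | j. q \<le> j \<and> j < n'}"
  assumes "p \<le> n" and "q \<le> n'"
    and "\<exists>G \<subseteq> carrier R. (\<forall>g\<in>G. \<forall>m. g m \<noteq> 0 \<longrightarrow> mono_in {p..<n} m) \<and> J = Idl\<^bsub>R\<^esub> G"
    and "J \<subseteq> Idl\<^bsub>R\<^esub> {f \<otimes>\<^bsub>R\<^esub> g | f g. f \<in> xt \<and> g \<in> xt}"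
    and "\<exists>G \<subseteq> carrier R. (\<forall>g\<in>G. \<forall>m. g m \<noteq> 0 \<longrightarrow> mono_in {n + q..<n + n'} m) \<and> J' = Idl\<^bsub>R\<^esub> G"
    and "J' \<subseteq> Idl\<^bsub>R\<^esub> {f \<otimes>\<^bsub>R\<^esub> g | f g. f \<in> yt \<and> g \<in> yt}"
  shows "regular_sequence R
           (fiber_product_module R (Idl\<^bsub>R\<^esub> (J \<union> yt)) (Idl\<^bsub>R\<^esub> (xt \<union> J')) (Idl\<^bsub>R\<^esub> (xt \<union> yt)))
           (map ps_var [0..<p] @ map (\<lambda>j. ps_var (n + j)) [0..<q])"
proof -
  interpret max: ideal "ps_max_ideal (n + n')" R unfolding R_def by (rule ideal_ps_max_ideal)
  obtain G where G: "G \<subseteq> carrier R" "\<forall>g\<in>G. \<forall>m. g m \<noteq> 0 \<longrightarrow> mono_in {p..<n} m" "J = Idl\<^bsub>R\<^esub> G"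
    using assms(6) by blast
  obtain G' where G': "G' \<subseteq> carrier R" "\<forall>g\<in>G'. \<forall>m. g m \<noteq> 0 \<longrightarrow> mono_in {n + q..<n + n'} m"
    "J' = Idl\<^bsub>R\<^esub> G'"
    using assms(8) by blast
  have xt: "xt = ps_var ` {p..<n}" unfolding xt_def by auto
  have yt: "yt = ps_var ` {n + q..<n + n'}"
    unfolding yt_def by (auto simp: image_iff) (metis add_diff_inverse_nat add_less_cancel_left
        le_add_diff_inverse nat_add_left_cancel_le not_less_iff_gr_or_eq le_add1 order_trans)
  have "xt \<subseteq> ps_max_ideal (n + n')" unfolding xt by (auto intro: ps_var_in_max_ideal)
  then have "{f \<otimes>\<^bsub>R\<^esub> g | f g. f \<in> xt \<and> g \<in> xt} \<subseteq> ps_max_ideal (n + n')"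
    using max.I_r_closed max.Icarr by blast
  then have G_max: "Idl\<^bsub>R\<^esub> G \<subseteq> ps_max_ideal (n + n')"
    using assms(7) max.genideal_minimal[OF max.is_ideal] unfolding G(3) by blast
  define ids where "ids = [0..<p] @ map (\<lambda>j. n + j) [0..<q]"
  have "distinct ids" "set ids \<subseteq> {..<n + n'} - ({p..<n} \<union> {n + q..<n + n'})"
    using assms(4,5) by (auto simp: ids_def distinct_map)
  moreover have "{p..<n} \<subseteq> {..<n + n'}" "{n + q..<n + n'} \<subseteq> {..<n + n'}" by auto
  ultimately show ?thesis
    using regular_sequence_ps_blocks[of "{p..<n}" "n + n'" "{n + q..<n + n'}" G G' ids]
      G G' G_max unfolding R_def xt yt G(3) G'(3) ids_def by (simp add: comp_def)
qed

end
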